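(* Let $\mathbf{u}=(u_1,u_2),\mathbf{v}=(v_1,v_2)\in\mathbb{R}^2$ be fixed linearly independent unit vectors, and let $D_1\subset\mathbb{R}^2$ be an open disc centered at the origin. Let $\mathbf{f}=(f_1,f_2)$ be a vector field on $\mathbb{R}^2$ with $f_1,f_2\in C^2_c(D_1)$. Then $$\operatorname{curl}\mathbf{f}=\frac{1}{\det(\mathbf{v},\mathbf{u})}\,D_{\mathbf{u}}D_{\mathbf{v}}\,\mathcal{L}\mathbf{f},$$ where $\det(\mathbf{v},\mathbf{u})=v_1u_2-u_1v_2$. In particular, the operator $\mathcal{L}$ is injective (invertible) on compactly supported (in $D_1$, with $C^2$ components) divergence-free vector fields.
   Context: For a function $h$ on $\mathbb{R}^2$ and a unit vector $\mathbf{u}$, $\mathcal{X}_{\mathbf{u}}h(\mathbf{x})=\int_0^\infty h(\mathbf{x}+t\mathbf{u})\,dt$ and $D_{\mathbf{u}}h=\mathbf{u}\cdot\nabla h$ is the directional derivative. The longitudinal V-line transform is $\mathcal{L}\mathbf{f}=-\mathcal{X}_{\mathbf{u}}(\mathbf{f}\cdot\mathbf{u})+\mathcal{X}_{\mathbf{v}}(\mathbf{f}\cdot\mathbf{v})$, a function on $\mathbb{R}^2$. In 2D, $\operatorname{curl}\mathbf{f}=\frac{\partial f_2}{\partial x_1}-\frac{\partial f_1}{\partial x_2}$. *)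

theory Defs
  imports "HOL-Analysis.Analysis"
begin

definition dir_deriv :: "real^2 \<Rightarrow> (real^2 \<Rightarrow> real) \<Rightarrow> real^2 \<Rightarrow> real" where
  "dir_deriv u h x = frechet_derivative h (at x) u"

definition partial :: "2 \<Rightarrow> (real^2 \<Rightarrow> real) \<Rightarrow> real^2 \<Rightarrow> real" where
  "partial i h x = frechet_derivative h (at x) (axis i 1)"

definition curl2 :: "(real^2 \<Rightarrow> real^2) \<Rightarrow> real^2 \<Rightarrow> real" where
  "curl2 f x = partial 1 (\<lambda>y. f y $ 2) x - partial 2 (\<lambda>y. f y $ 1) x"

definition div2 :: "(real^2 \<Rightarrow> real^2) \<Rightarrow> real^2 \<Rightarrow> real" where
  "div2 f x = partial 1 (\<lambda>y. f y $ 1) x + partial 2 (\<lambda>y. f y $ 2) x"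

definition ray_transform :: "real^2 \<Rightarrow> (real^2 \<Rightarrow> real) \<Rightarrow> real^2 \<Rightarrow> real" where
  "ray_transform u h x = integral {0..} (\<lambda>t::real. h (x + t *\<^sub>R u))"

definition LVT :: "real^2 \<Rightarrow> real^2 \<Rightarrow> (real^2 \<Rightarrow> real^2) \<Rightarrow> real^2 \<Rightarrow> real" where
  "LVT u v f x = - ray_transform u (\<lambda>y. f y \<bullet> u) x + ray_transform v (\<lambda>y. f y \<bullet> v) x"

definition C2 :: "(real^2 \<Rightarrow> real) \<Rightarrow> bool" where
  "C2 g \<longleftrightarrow> (\<exists>D :: real^2 \<Rightarrow> ((real^2) \<Rightarrow>\<^sub>L real). \<exists>D2 :: real^2 \<Rightarrow> ((real^2) \<Rightarrow>\<^sub>L ((real^2) \<Rightarrow>\<^sub>L real)).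
      (\<forall>x. (g has_derivative blinfun_apply (D x)) (at x)) \<and>
      (\<forall>x. (D has_derivative blinfun_apply (D2 x)) (at x)) \<and>
      continuous_on UNIV D2)"

definition C2c_on :: "(real^2) set \<Rightarrow> (real^2 \<Rightarrow> real) \<Rightarrow> bool" where
  "C2c_on S g \<longleftrightarrow> C2 g \<and> compact (closure {x. g x \<noteq> 0}) \<and> closure {x. g x \<noteq> 0} \<subseteq> S"

definition det2 :: "real^2 \<Rightarrow> real^2 \<Rightarrow> real" where
  "det2 v u = v$1 * u$2 - u$1 * v$2"

end

theory Submission
  imports Defs "HOL-Complex_Analysis.Cauchy_Integral_Formula"
begin

(* For a compactly supported C^1 function \<psi>, differentiation commutes with the ray transform,
   and the fundamental theorem of calculus gives X_u (D_u \<psi>) = -\<psi>. Hence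
   D_v X_v (f \<bullet> v) = -(f \<bullet> v) and D_u X_u D_v (f \<bullet> u) = -D_v (f \<bullet> u), so that
   D_u D_v Lf = D_v (f \<bullet> u) - D_u (f \<bullet> v) = det(v, u) curl f.
   For injectivity, the difference h of two divergence-free fields with equal transforms also has
   curl h = 0. Then div h = curl h = 0 are the Cauchy-Riemann equations for h_1 - i h_2, an entire
   function vanishing outside a disc, hence zero by Liouville's theorem. *)

definition has_continuous_derivative ::
    "('a::real_normed_vector \<Rightarrow> 'b::real_normed_vector) \<Rightarrow> ('a \<Rightarrow> 'a \<Rightarrow>\<^sub>L 'b) \<Rightarrow> bool" where
  "has_continuous_derivative g D \<longleftrightarrow>
     (\<forall>x. (g has_derivative blinfun_apply (D x)) (at x)) \<and> continuous_on UNIV D"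

lemma has_continuous_derivativeD:
  "has_continuous_derivative g D \<Longrightarrow> (g has_derivative blinfun_apply (D x)) (at x)"
  by (simp add: has_continuous_derivative_def)

lemma has_continuous_derivative_continuous_on:
  "has_continuous_derivative g D \<Longrightarrow> continuous_on S g"
  by (meson has_continuous_derivativeD continuous_at_imp_continuous_on has_derivative_continuous)

lemma has_continuous_derivative_continuous_on_derivative:
  "has_continuous_derivative g D \<Longrightarrow> continuous_on S D"
  by (auto simp: has_continuous_derivative_def intro: continuous_on_subset)

lemma has_continuous_derivative_lincomb:
  assumes "has_continuous_derivative g1 D1" and "has_continuous_derivative g2 D2"
  shows "has_continuous_derivative (\<lambda>x. a *\<^sub>R g1 x + b *\<^sub>R g2 x) (\<lambda>x. a *\<^sub>R D1 x + b *\<^sub>R D2 x)"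
  unfolding has_continuous_derivative_def
proof (intro conjI allI)
  fix x
  show "((\<lambda>x. a *\<^sub>R g1 x + b *\<^sub>R g2 x) has_derivative blinfun_apply (a *\<^sub>R D1 x + b *\<^sub>R D2 x)) (at x)"
    using has_derivative_add[OF has_derivative_scaleR_right[OF has_continuous_derivativeD[OF assms(1)]]
        has_derivative_scaleR_right[OF has_continuous_derivativeD[OF assms(2)]]]
    by (rule has_derivative_eq_rhs) (simp add: fun_eq_iff blinfun.bilinear_simps)
  show "continuous_on UNIV (\<lambda>x. a *\<^sub>R D1 x + b *\<^sub>R D2 x)"
    using assms by (intro continuous_intros has_continuous_derivative_continuous_on_derivative)
qed

(* blinfun.prod_left w is evaluation at w, i.e. the bounded linear map L \<mapsto> L w. *)
lemma has_continuous_derivative_apply: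
  fixes D :: "'a::real_normed_vector \<Rightarrow> 'a \<Rightarrow>\<^sub>L 'b::real_normed_vector"
  assumes "has_continuous_derivative D E"
  shows "has_continuous_derivative (\<lambda>x. D x w) (\<lambda>x. blinfun.prod_left w o\<^sub>L E x)"
  unfolding has_continuous_derivative_def
proof (intro conjI allI)
  fix x
  show "((\<lambda>x. D x w) has_derivative blinfun_apply (blinfun.prod_left w o\<^sub>L E x)) (at x)"
    by (rule has_derivative_eq_rhs[OF bounded_linear.has_derivative[OF blinfun.bounded_linear_left
          has_continuous_derivativeD[OF assms]]]) (simp add: fun_eq_iff)
  show "continuous_on UNIV (\<lambda>x. blinfun.prod_left w o\<^sub>L E x)"
    using assms by (intro continuous_intros has_continuous_derivative_continuous_on_derivative)
qed

lemma C2E: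
  assumes "C2 g"
  obtains D E where "has_continuous_derivative g D" and "has_continuous_derivative D E"
proof -
  from assms[unfolded C2_def] obtain D E
    where "\<forall>x. (g has_derivative blinfun_apply (D x)) (at x)"
      and dD: "\<forall>x. (D has_derivative blinfun_apply (E x)) (at x)" and "continuous_on UNIV E"
    by blast
  moreover have "continuous_on UNIV D"
    using dD by (meson continuous_at_imp_continuous_on has_derivative_continuous)
  ultimately show thesis
    by (intro that) (simp_all add: has_continuous_derivative_def)
qed

lemma C2c_on_differentiable:
  assumes "C2c_on S g" shows "g differentiable at x"
proof -
  obtain D E where "has_continuous_derivative g D" "has_continuous_derivative D E"
    using assms C2E unfolding C2c_on_def by blast
  then show ?thesis using has_continuous_derivativeD differentiableI by blast
qed

lemma C2c_on_vanishes_outside: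
  assumes "C2c_on S g" and "x \<notin> S" shows "g x = 0"
proof (rule ccontr)
  assume "g x \<noteq> 0"
  then have "x \<in> closure {y. g y \<noteq> 0}"
    by (intro closure_subset[THEN subsetD]) simp
  then show False
    using assms unfolding C2c_on_def by blast
qed

lemma derivative_vanishes_outside:
  fixes g :: "'a::real_normed_vector \<Rightarrow> 'b::real_normed_vector"
  assumes "(g has_derivative blinfun_apply D) (at x)"
    and "\<And>y. R \<le> norm y \<Longrightarrow> g y = 0" and "R + 1 \<le> norm x"
  shows "D = 0"
proof -
  have "(g has_derivative (\<lambda>_. 0)) (at x)"
  proof (rule has_derivative_transform_within_open[OF has_derivative_const, where s="ball x 1"])
    fix y assume "y \<in> ball x 1"
    then have "R \<le> norm y"
      using assms(3) norm_triangle_ineq2[of x y] by (simp add: dist_norm)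
    then show "0 = g y" using assms(2) by simp
  qed simp_all
  then show ?thesis
    using assms(1) has_derivative_unique by (metis blinfun_eqI zero_blinfun.rep_eq)
qed

lemma dir_deriv_eqI: "(h has_derivative F) (at x) \<Longrightarrow> dir_deriv w h x = F w"
  unfolding dir_deriv_def by (simp add: frechet_derivative_at[symmetric])

lemma partial_eqI: "(h has_derivative F) (at x) \<Longrightarrow> partial i h x = F (axis i 1)"
  unfolding partial_def by (simp add: frechet_derivative_at[symmetric])

lemma partial_diff:
  assumes "h1 differentiable at x" and "h2 differentiable at x"
  shows "partial i (\<lambda>y. h1 y - h2 y) x = partial i h1 x - partial i h2 x"
  using partial_eqI[OF has_derivative_diff[OF assms[unfolded frechet_derivative_works]]]
  by (simp add: partial_def)

lemma curl2_diff:
  fixes f g :: "real^2 \<Rightarrow> real^2"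
  assumes "\<And>i. (\<lambda>y. f y $ i) differentiable at x" and "\<And>i. (\<lambda>y. g y $ i) differentiable at x"
  shows "curl2 (\<lambda>y. f y - g y) x = curl2 f x - curl2 g x"
  using assms by (simp add: curl2_def partial_diff)

lemma div2_diff:
  fixes f g :: "real^2 \<Rightarrow> real^2"
  assumes "\<And>i. (\<lambda>y. f y $ i) differentiable at x" and "\<And>i. (\<lambda>y. g y $ i) differentiable at x"
  shows "div2 (\<lambda>y. f y - g y) x = div2 f x - div2 g x"
  using assms by (simp add: div2_def partial_diff)

lemma linear_real2_expansion:
  fixes L :: "real^2 \<Rightarrow> real"
  assumes "linear L"
  shows "L w = w$1 * L (axis 1 1) + w$2 * L (axis 2 1)"
proof -
  have "w = w$1 *\<^sub>R axis 1 1 + w$2 *\<^sub>R axis 2 1"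
    by (simp add: vec_eq_iff forall_2 axis_def)
  then have "L w = L (w$1 *\<^sub>R axis 1 1 + w$2 *\<^sub>R axis 2 1)" by simp
  then show ?thesis by (simp add: linear_add[OF assms] linear_scale[OF assms])
qed

lemma integral_atLeast_0_eq_cbox:
  fixes g :: "real \<Rightarrow> 'a::banach"
  assumes "continuous_on (cbox 0 T) g" and "\<And>t. T \<le> t \<Longrightarrow> g t = 0"
  shows "integral {0..} g = integral (cbox 0 T) g"
proof -
  have "((\<lambda>t. if t \<in> cbox 0 T then g t else 0) has_integral integral (cbox 0 T) g) {0..}"
    using integrable_continuous[OF assms(1)] by (subst has_integral_restrict) auto
  then have "(g has_integral integral (cbox 0 T) g) {0..}"
    by (rule has_integral_cong[THEN iffD1, rotated]) (auto simp: assms(2))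
  then show ?thesis by (rule integral_unique)
qed

lemma ray_transform_eq_integral_cbox:
  assumes "norm u = 1" and "continuous_on UNIV \<psi>"
    and "\<And>y. R \<le> norm y \<Longrightarrow> \<psi> y = 0" and "R + norm x \<le> T"
  shows "ray_transform u \<psi> x = integral (cbox 0 T) (\<lambda>t. \<psi> (x + t *\<^sub>R u))"
  unfolding ray_transform_def
proof (rule integral_atLeast_0_eq_cbox)
  show "continuous_on (cbox 0 T) (\<lambda>t. \<psi> (x + t *\<^sub>R u))"
    by (intro continuous_on_compose2[OF assms(2)] continuous_intros) auto
  fix t :: real assume "T \<le> t"
  moreover have "norm (t *\<^sub>R u) \<le> norm x + norm (x + t *\<^sub>R u)"
    using norm_triangle_ineq4[of "x + t *\<^sub>R u" x] by simp
  ultimately show "\<psi> (x + t *\<^sub>R u) = 0"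
    using assms by (intro assms(3)) auto
qed

lemma has_derivative_integral_along_ray:
  fixes \<psi> :: "'a::banach \<Rightarrow> 'b::banach"
  assumes \<psi>: "has_continuous_derivative \<psi> D"
  shows "((\<lambda>x. integral (cbox 0 T) (\<lambda>t. \<psi> (x + t *\<^sub>R u))) has_derivative
           (\<lambda>w. integral (cbox 0 T) (\<lambda>t. D (x + t *\<^sub>R u) w))) (at x)"
proof -
  have cD: "continuous_on S D" for S
    by (rule has_continuous_derivative_continuous_on_derivative[OF \<psi>])
  have "((\<lambda>x. integral (cbox 0 T) (\<lambda>t. \<psi> (x + t *\<^sub>R u))) has_derivative
      blinfun_apply (integral (cbox 0 T) (\<lambda>t. D (x + t *\<^sub>R u)))) (at x within UNIV)"
  proof (rule leibniz_rule[where fx="\<lambda>x t. D (x + t *\<^sub>R u)"])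
    fix y and t :: real
    show "((\<lambda>y. \<psi> (y + t *\<^sub>R u)) has_derivative blinfun_apply (D (y + t *\<^sub>R u))) (at y within UNIV)"
      using has_derivative_compose[OF has_derivative_add[OF has_derivative_ident has_derivative_const]
          has_continuous_derivativeD[OF \<psi>]] by simp
    show "(\<lambda>t. \<psi> (y + t *\<^sub>R u)) integrable_on cbox 0 T"
      by (intro integrable_continuous continuous_on_compose2[OF has_continuous_derivative_continuous_on[OF \<psi>]]
          continuous_intros) auto
  next
    show "continuous_on (UNIV \<times> cbox 0 T) (\<lambda>(y, t). D (y + t *\<^sub>R u))"
      unfolding case_prod_beta
      by (rule continuous_on_compose2[OF cD]) (auto intro!: continuous_intros)
  qed auto
  moreover have "blinfun_apply (integral (cbox 0 T) (\<lambda>t. D (x + t *\<^sub>R u))) =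
      (\<lambda>w. integral (cbox 0 T) (\<lambda>t. D (x + t *\<^sub>R u) w))"
    by (intro ext blinfun_apply_integral integrable_continuous continuous_on_compose2[OF cD] continuous_intros) auto
  ultimately show ?thesis by simp
qed

lemma has_derivative_ray_transform:
  fixes \<psi> :: "real^2 \<Rightarrow> real"
  assumes u: "norm u = 1" and \<psi>: "has_continuous_derivative \<psi> D"
    and supp: "\<And>y. R \<le> norm y \<Longrightarrow> \<psi> y = 0"
  shows "(ray_transform u \<psi> has_derivative (\<lambda>w. ray_transform u (\<lambda>y. D y w) x)) (at x)"
proof -
  define T where "T = \<bar>R\<bar> + norm x + 1"
  have supp_D: "D y w = 0" if "R + 1 \<le> norm y" for y w
    using derivative_vanishes_outside[OF has_continuous_derivativeD[OF \<psi>] supp that] by simp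
  have "ray_transform u (\<lambda>y. D y w) x = integral (cbox 0 T) (\<lambda>t. D (x + t *\<^sub>R u) w)" for w
    by (rule ray_transform_eq_integral_cbox[OF u _ supp_D])
      (auto simp: T_def intro!: continuous_intros has_continuous_derivative_continuous_on_derivative[OF \<psi>])
  moreover have "integral (cbox 0 T) (\<lambda>t. \<psi> (y + t *\<^sub>R u)) = ray_transform u \<psi> y" if "y \<in> ball x 1" for y
  proof (rule ray_transform_eq_integral_cbox[OF u has_continuous_derivative_continuous_on[OF \<psi>] supp, symmetric])
    show "R + norm y \<le> T"
      using that norm_triangle_ineq2[of y x] by (simp add: T_def dist_norm norm_minus_commute)
  qed
  ultimately show ?thesis
    using has_derivative_transform_within_open[OF has_derivative_integral_along_ray[OF \<psi>], of "ball x 1"]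
    by simp
qed

lemma ray_transform_derivative_along_ray:
  fixes \<psi> :: "real^2 \<Rightarrow> real"
  assumes u: "norm u = 1" and \<psi>: "has_continuous_derivative \<psi> D"
    and supp: "\<And>y. R \<le> norm y \<Longrightarrow> \<psi> y = 0"
  shows "ray_transform u (\<lambda>y. D y u) x = - \<psi> x"
proof -
  define T where "T = \<bar>R\<bar> + 1 + norm x"
  have supp_D: "D y u = 0" if "R + 1 \<le> norm y" for y
    using derivative_vanishes_outside[OF has_continuous_derivativeD[OF \<psi>] supp that] by simp
  have "ray_transform u (\<lambda>y. D y u) x = integral {0..T} (\<lambda>t. D (x + t *\<^sub>R u) u)"
    by (subst cbox_interval[symmetric], rule ray_transform_eq_integral_cbox[OF u _ supp_D])
      (auto simp: T_def intro!: continuous_intros has_continuous_derivative_continuous_on_derivative[OF \<psi>])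
  also have "\<dots> = \<psi> (x + T *\<^sub>R u) - \<psi> x"
  proof -
    have "((\<lambda>t. D (x + t *\<^sub>R u) u) has_integral \<psi> (x + T *\<^sub>R u) - \<psi> (x + 0 *\<^sub>R u)) {0..T}"
    proof (rule fundamental_theorem_of_calculus)
      show "0 \<le> T" by (simp add: T_def)
      fix t
      have "((\<lambda>t. \<psi> (x + t *\<^sub>R u)) has_derivative (\<lambda>h. D (x + t *\<^sub>R u) (0 + h *\<^sub>R u)))
          (at t within {0..T})"
        by (rule has_derivative_compose[OF has_derivative_add[OF has_derivative_const
              has_derivative_scaleR_left[OF has_derivative_ident]] has_continuous_derivativeD[OF \<psi>]])
      then show "((\<lambda>t. \<psi> (x + t *\<^sub>R u)) has_vector_derivative D (x + t *\<^sub>R u) u) (at t within {0..T})"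
        by (simp add: has_vector_derivative_def blinfun.scaleR_right)
    qed
    then show ?thesis by (simp add: integral_unique)
  qed
  also have "\<psi> (x + T *\<^sub>R u) = 0"
  proof (rule supp)
    have "norm (T *\<^sub>R u) \<le> norm x + norm (x + T *\<^sub>R u)"
      using norm_triangle_ineq4[of "x + T *\<^sub>R u" x] by simp
    then show "R \<le> norm (x + T *\<^sub>R u)" using u by (simp add: T_def)
  qed
  finally show ?thesis by simp
qed

lemma dir_deriv_dir_deriv_V_line:
  fixes a b :: "real^2 \<Rightarrow> real"
  assumes u: "norm u = 1" and v: "norm v = 1"
    and a: "has_continuous_derivative a Da" "has_continuous_derivative Da Ea"
    and b: "has_continuous_derivative b Db"
    and supp_a: "\<And>y. R \<le> norm y \<Longrightarrow> a y = 0" and supp_b: "\<And>y. R \<le> norm y \<Longrightarrow> b y = 0"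
  shows "dir_deriv u (dir_deriv v (\<lambda>y. - ray_transform u a y + ray_transform v b y)) x = Da x v - Db x u"
proof -
  have Da_v: "has_continuous_derivative (\<lambda>y. Da y v) (\<lambda>y. blinfun.prod_left v o\<^sub>L Ea y)"
    by (rule has_continuous_derivative_apply[OF a(2)])
  have supp_Da_v: "Da y v = 0" if "R + 1 \<le> norm y" for y
    using derivative_vanishes_outside[OF has_continuous_derivativeD[OF a(1)] supp_a that] by simp
  have "dir_deriv v (\<lambda>y. - ray_transform u a y + ray_transform v b y) =
      (\<lambda>y. - ray_transform u (\<lambda>z. Da z v) y - b y)"
  proof
    fix y
    have "((\<lambda>y. - ray_transform u a y + ray_transform v b y) has_derivative
        (\<lambda>w. - ray_transform u (\<lambda>z. Da z w) y + ray_transform v (\<lambda>z. Db z w) y)) (at y)"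
      by (intro has_derivative_add has_derivative_minus
          has_derivative_ray_transform[OF u a(1) supp_a] has_derivative_ray_transform[OF v b supp_b])
    then show "dir_deriv v (\<lambda>y. - ray_transform u a y + ray_transform v b y) y =
        - ray_transform u (\<lambda>z. Da z v) y - b y"
      using ray_transform_derivative_along_ray[OF v b supp_b] by (simp add: dir_deriv_eqI)
  qed
  moreover have "((\<lambda>y. - ray_transform u (\<lambda>z. Da z v) y - b y) has_derivative
      (\<lambda>w. - ray_transform u (\<lambda>z. (blinfun.prod_left v o\<^sub>L Ea z) w) x - Db x w)) (at x)"
    by (intro has_derivative_diff has_derivative_minus
        has_derivative_ray_transform[OF u Da_v supp_Da_v] has_continuous_derivativeD[OF b])
  ultimately show ?thesis
    using ray_transform_derivative_along_ray[OF u Da_v supp_Da_v] by (simp add: dir_deriv_eqI)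
qed

lemma det2_mult_curl2_eq_dir_deriv_LVT:
  fixes f :: "real^2 \<Rightarrow> real^2"
  assumes u: "norm u = 1" and v: "norm v = 1"
    and f1: "C2c_on (ball 0 r) (\<lambda>x. f x $ 1)" and f2: "C2c_on (ball 0 r) (\<lambda>x. f x $ 2)"
  shows "det2 v u * curl2 f x = dir_deriv u (dir_deriv v (LVT u v f)) x"
proof -
  obtain D1 E1 where D1: "has_continuous_derivative (\<lambda>x. f x $ 1) D1" "has_continuous_derivative D1 E1"
    using f1 C2E unfolding C2c_on_def by metis
  obtain D2 E2 where D2: "has_continuous_derivative (\<lambda>x. f x $ 2) D2" "has_continuous_derivative D2 E2"
    using f2 C2E unfolding C2c_on_def by metis
  have inner_expand: "f y \<bullet> w = w$1 *\<^sub>R f y $ 1 + w$2 *\<^sub>R f y $ 2" for y w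
    by (simp add: inner_vec_def sum_2 mult.commute)
  have supp: "w$1 *\<^sub>R f y $ 1 + w$2 *\<^sub>R f y $ 2 = 0" if "r \<le> norm y" for w y
    using C2c_on_vanishes_outside[OF f1, of y] C2c_on_vanishes_outside[OF f2, of y] that by simp
  have "LVT u v f = (\<lambda>y. - ray_transform u (\<lambda>y. u$1 *\<^sub>R f y $ 1 + u$2 *\<^sub>R f y $ 2) y
      + ray_transform v (\<lambda>y. v$1 *\<^sub>R f y $ 1 + v$2 *\<^sub>R f y $ 2) y)"
    by (simp add: fun_eq_iff LVT_def inner_expand)
  then have second_deriv: "dir_deriv u (dir_deriv v (LVT u v f)) x =
      (u$1 *\<^sub>R D1 x + u$2 *\<^sub>R D2 x) v - (v$1 *\<^sub>R D1 x + v$2 *\<^sub>R D2 x) u"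
    using dir_deriv_dir_deriv_V_line[OF u v has_continuous_derivative_lincomb[OF D1(1) D2(1)]
        has_continuous_derivative_lincomb[OF D1(2) D2(2)] has_continuous_derivative_lincomb[OF D1(1) D2(1)]
        supp supp]
    by simp
  have curl: "curl2 f x = D2 x (axis 1 1) - D1 x (axis 2 1)"
    using partial_eqI[OF has_continuous_derivativeD[OF D1(1)]] partial_eqI[OF has_continuous_derivativeD[OF D2(1)]]
    by (simp add: curl2_def)
  have expand: "blinfun_apply D w = w$1 * D (axis 1 1) + w$2 * D (axis 2 1)"
    for D :: "(real^2) \<Rightarrow>\<^sub>L real" and w
    by (rule linear_real2_expansion[OF bounded_linear.linear[OF blinfun.bounded_linear_right]])
  show ?thesis
    unfolding second_deriv curl blinfun.add_left blinfun.scaleR_left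
      expand[of "D1 x" u] expand[of "D1 x" v] expand[of "D2 x" u] expand[of "D2 x" v]
    by (simp add: det2_def algebra_simps)
qed

definition real2_of_complex :: "complex \<Rightarrow> real^2" where
  "real2_of_complex z = Re z *\<^sub>R axis 1 1 + Im z *\<^sub>R axis 2 1"

lemma real2_of_complex_nth [simp]: "real2_of_complex z $ 1 = Re z" "real2_of_complex z $ 2 = Im z"
  by (simp_all add: real2_of_complex_def axis_def)

lemma real2_of_complex_Complex: "real2_of_complex (Complex (p$1) (p$2)) = p"
  by (simp add: vec_eq_iff forall_2)

lemma bounded_linear_real2_of_complex: "bounded_linear real2_of_complex"
  unfolding real2_of_complex_def
  by (intro bounded_linear_add bounded_linear_compose[OF bounded_linear_scaleR_left]
      bounded_linear_Re bounded_linear_Im)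

lemma norm_real2_of_complex [simp]: "norm (real2_of_complex z) = cmod z"
  by (simp add: norm_vec_def L2_set_def sum_2 cmod_def)

lemma holomorphic_on_UNIV_if_cauchy_riemann:
  fixes h1 h2 :: "real^2 \<Rightarrow> real"
  assumes d1: "\<And>x. h1 differentiable at x" and d2: "\<And>x. h2 differentiable at x"
    and cr1: "\<And>x. partial 1 h1 x = - partial 2 h2 x" and cr2: "\<And>x. partial 2 h1 x = partial 1 h2 x"
  shows "(\<lambda>z. complex_of_real (h1 (real2_of_complex z)) - \<i> * complex_of_real (h2 (real2_of_complex z)))
           holomorphic_on UNIV"
  unfolding holomorphic_on_def field_differentiable_def has_field_derivative_def
proof (intro ballI exI)
  fix z
  define H1 where "H1 = frechet_derivative h1 (at (real2_of_complex z))"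
  define H2 where "H2 = frechet_derivative h2 (at (real2_of_complex z))"
  have "(h1 has_derivative H1) (at (real2_of_complex z))" and "(h2 has_derivative H2) (at (real2_of_complex z))"
    using d1 d2 frechet_derivative_works unfolding H1_def H2_def by blast+
  note dH = this this[THEN has_derivative_linear]
  have dV: "(real2_of_complex has_derivative real2_of_complex) (at z)"
    by (rule bounded_linear_imp_has_derivative[OF bounded_linear_real2_of_complex])
  have dh1: "((\<lambda>z. h1 (real2_of_complex z)) has_derivative (\<lambda>w. H1 (real2_of_complex w))) (at z)"
    by (rule has_derivative_compose[OF dV dH(1)])
  have dh2: "((\<lambda>z. h2 (real2_of_complex z)) has_derivative (\<lambda>w. H2 (real2_of_complex w))) (at z)"
    by (rule has_derivative_compose[OF dV dH(2)])
  have "((\<lambda>z. complex_of_real (h1 (real2_of_complex z)) - \<i> * complex_of_real (h2 (real2_of_complex z)))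
      has_derivative (\<lambda>w. complex_of_real (H1 (real2_of_complex w)) - \<i> * complex_of_real (H2 (real2_of_complex w))))
      (at z)"
    by (rule has_derivative_diff[OF has_derivative_of_real[OF dh1]
          has_derivative_mult_right[OF has_derivative_of_real[OF dh2]]])
  moreover have "(\<lambda>w. complex_of_real (H1 (real2_of_complex w)) - \<i> * complex_of_real (H2 (real2_of_complex w))) =
      (*) (complex_of_real (H1 (axis 1 1)) - \<i> * complex_of_real (H2 (axis 1 1)))"
  proof
    fix w
    have "H1 (real2_of_complex w) = Re w * H1 (axis 1 1) + Im w * H1 (axis 2 1)"
      and "H2 (real2_of_complex w) = Re w * H2 (axis 1 1) + Im w * H2 (axis 2 1)"
      using linear_real2_expansion[OF dH(3), of "real2_of_complex w"]
        linear_real2_expansion[OF dH(4), of "real2_of_complex w"] by simp_all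
    moreover have "H1 (axis 1 1) = - H2 (axis 2 1)" and "H1 (axis 2 1) = H2 (axis 1 1)"
      using cr1[of "real2_of_complex z"] cr2[of "real2_of_complex z"] by (simp_all add: partial_def H1_def H2_def)
    ultimately show "complex_of_real (H1 (real2_of_complex w)) - \<i> * complex_of_real (H2 (real2_of_complex w)) =
        (complex_of_real (H1 (axis 1 1)) - \<i> * complex_of_real (H2 (axis 1 1))) * w"
      by (simp add: complex_eq_iff algebra_simps)
  qed
  ultimately show "((\<lambda>z. complex_of_real (h1 (real2_of_complex z)) - \<i> * complex_of_real (h2 (real2_of_complex z)))
      has_derivative (*) (complex_of_real (H1 (axis 1 1)) - \<i> * complex_of_real (H2 (axis 1 1)))) (at z within UNIV)"
    by simp
qed

lemma curl_free_div_free_bounded_support_eq_0: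
  fixes h :: "real^2 \<Rightarrow> real^2"
  assumes diff: "\<And>i x. (\<lambda>y. h y $ i) differentiable at x"
    and curl: "\<And>x. curl2 h x = 0" and div: "\<And>x. div2 h x = 0"
    and supp: "\<And>x. R \<le> norm x \<Longrightarrow> h x = 0"
  shows "h x = 0"
proof -
  define F where
    "F z = complex_of_real (h (real2_of_complex z) $ 1) - \<i> * complex_of_real (h (real2_of_complex z) $ 2)" for z
  have "F holomorphic_on UNIV"
    unfolding F_def
  proof (rule holomorphic_on_UNIV_if_cauchy_riemann[OF diff diff])
    show "partial 1 (\<lambda>y. h y $ 1) x = - partial 2 (\<lambda>y. h y $ 2) x" for x
      using div[of x] by (simp add: div2_def)
    show "partial 2 (\<lambda>y. h y $ 1) x = partial 1 (\<lambda>y. h y $ 2) x" for x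
      using curl[of x] by (simp add: curl2_def)
  qed
  moreover have "(F \<longlongrightarrow> 0) at_infinity"
  proof (rule tendsto_eventually)
    have "F z = 0" if "R \<le> norm z" for z
      using supp[of "real2_of_complex z"] that by (simp add: F_def)
    then show "\<forall>\<^sub>F z in at_infinity. F z = 0"
      unfolding eventually_at_infinity by blast
  qed
  ultimately have "F (Complex (x$1) (x$2)) = 0"
    by (rule Liouville_weak_0)
  then show ?thesis
    by (simp add: F_def real2_of_complex_Complex complex_eq_iff vec_eq_iff forall_2)
qed

lemma C2c_fields_eq_if_curl2_div2_eq:
  fixes f g :: "real^2 \<Rightarrow> real^2"
  assumes f: "C2c_on (ball 0 r) (\<lambda>x. f x $ 1)" "C2c_on (ball 0 r) (\<lambda>x. f x $ 2)"
    and g: "C2c_on (ball 0 r) (\<lambda>x. g x $ 1)" "C2c_on (ball 0 r) (\<lambda>x. g x $ 2)"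
    and curl: "\<And>x. curl2 f x = curl2 g x" and div: "\<And>x. div2 f x = div2 g x"
  shows "f = g"
proof -
  have df: "(\<lambda>y. f y $ i) differentiable at x" and dg: "(\<lambda>y. g y $ i) differentiable at x" for i x
    using exhaust_2[of i] f g by (auto intro: C2c_on_differentiable)
  have "f x - g x = 0" for x
  proof (rule curl_free_div_free_bounded_support_eq_0[of "\<lambda>x. f x - g x"])
    show "(\<lambda>y. (f y - g y) $ i) differentiable at x" for i x
      using df dg by simp
    show "curl2 (\<lambda>x. f x - g x) x = 0" and "div2 (\<lambda>x. f x - g x) x = 0" for x
      using curl div by (simp_all add: curl2_diff div2_diff df dg)
    show "f x - g x = 0" if "r \<le> norm x" for x
      using C2c_on_vanishes_outside[OF f(1), of x] C2c_on_vanishes_outside[OF f(2), of x]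
        C2c_on_vanishes_outside[OF g(1), of x] C2c_on_vanishes_outside[OF g(2), of x] that
      by (simp add: vec_eq_iff forall_2)
  qed
  then show ?thesis by auto
qed

lemma det2_neq_0_if_independent:
  fixes u v :: "real^2"
  assumes "u \<noteq> v" and "independent {u, v}"
  shows "det2 v u \<noteq> 0"
proof
  assume "det2 v u = 0"
  then have cross: "u$j * v$i = u$i * v$j" for i j
    using exhaust_2[of i] exhaust_2[of j] by (auto simp: det2_def algebra_simps)
  have "v \<noteq> 0" using assms(2) dependent_zero by blast
  then obtain i where "v$i \<noteq> 0" by (auto simp: vec_eq_iff)
  then have "u = (u$i / v$i) *\<^sub>R v"
    using cross[of _ i] by (simp add: vec_eq_iff field_simps)
  then have "u \<in> span {v}" by (metis span_base span_scale singletonI)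
  moreover have "u \<notin> span {v}" using assms by (simp add: independent_insert)
  ultimately show False by blast
qed

theorem theorem3:
  fixes u v :: "real^2" and r :: real and f :: "real^2 \<Rightarrow> real^2"
  assumes "norm u = 1" and "norm v = 1"
    and "u \<noteq> v" and "independent {u, v}"
    and "r > 0"
    and "C2c_on (ball 0 r) (\<lambda>x. f x $ 1)" and "C2c_on (ball 0 r) (\<lambda>x. f x $ 2)"
  shows "(\<forall>x. curl2 f x = (1 / det2 v u) * dir_deriv u (dir_deriv v (LVT u v f)) x)
    \<and> (\<forall>g :: real^2 \<Rightarrow> real^2.
         C2c_on (ball 0 r) (\<lambda>x. g x $ 1) \<and> C2c_on (ball 0 r) (\<lambda>x. g x $ 2) \<and>
         (\<forall>x. div2 f x = 0) \<and> (\<forall>x. div2 g x = 0) \<and> LVT u v f = LVT u v g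
         \<longrightarrow> f = g)"
proof -
  have inversion: "curl2 h x = (1 / det2 v u) * dir_deriv u (dir_deriv v (LVT u v h)) x"
    if "C2c_on (ball 0 r) (\<lambda>x. h x $ 1)" and "C2c_on (ball 0 r) (\<lambda>x. h x $ 2)" for h x
    using det2_mult_curl2_eq_dir_deriv_LVT[OF assms(1,2) that] det2_neq_0_if_independent[OF assms(3,4)]
    by (simp add: field_simps)
  show ?thesis
  proof (intro conjI allI impI)
    show "curl2 f x = (1 / det2 v u) * dir_deriv u (dir_deriv v (LVT u v f)) x" for x
      using inversion[OF assms(6,7)] .
    fix g :: "real^2 \<Rightarrow> real^2"
    assume "C2c_on (ball 0 r) (\<lambda>x. g x $ 1) \<and> C2c_on (ball 0 r) (\<lambda>x. g x $ 2) \<and>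
      (\<forall>x. div2 f x = 0) \<and> (\<forall>x. div2 g x = 0) \<and> LVT u v f = LVT u v g"
    then show "f = g"
      using assms(6,7) inversion[OF assms(6,7)] inversion[of g]
      by (intro C2c_fields_eq_if_curl2_div2_eq[of r]) auto
  qed
qed

end
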